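(* Let $\kappa$ be an infinite cardinal and let $x$ be a regular ultrafilter on $\kappa$. Assume $Y$ is a compact Hausdorff space with $w(Y)\le\kappa$, $F\subseteq Y$ has empty interior, and $y\in F$. Then there is a map $g:\kappa\to Y$ such that: (A) $\beta g$ maps $\beta\kappa$ onto $Y$; (B) $(\beta g)(x) = y$; (C) $g(\xi)\notin F$ for all $\xi<\kappa$; (D) $(\beta g)^{-1}(F)$ is nowhere dense in $\beta\kappa$.
   Context: $\beta\kappa$ is the Čech–Stone compactification of the discrete space $\kappa$, i.e. the space of ultrafilters on $\kappa$ with principal ultrafilters identified with points of $\kappa$. For $g:\kappa\to Y$ with $Y$ compact Hausdorff, $\beta g:\beta\kappa\to Y$ is the unique continuous extension of $g$. An ultrafilter $x$ on $\kappa$ is regular if there are sets $E_\alpha\in x$ ($\alpha<\kappa$) such that for every $\xi<\kappa$ the set $\{\alpha<\kappa : \xi\in E_\alpha\}$ is finite. $w(Y)$ is the weight of $Y$. *)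

theory Defs
  imports "HOL-Analysis.Analysis"
begin

unbundle cardinal_syntax

definition ultrafilter_on :: "'k set set \<Rightarrow> bool" where
  "ultrafilter_on u \<longleftrightarrow>
     UNIV \<in> u \<and> {} \<notin> u \<and>
     (\<forall>A B. A \<in> u \<and> A \<subseteq> B \<longrightarrow> B \<in> u) \<and>
     (\<forall>A B. A \<in> u \<and> B \<in> u \<longrightarrow> A \<inter> B \<in> u) \<and>
     (\<forall>A. A \<in> u \<or> - A \<in> u)"

text \<open>Principal ultrafilter: identification of a point of 'k with a point of beta 'k.\<close>
definition principal_uf :: "'k \<Rightarrow> 'k set set" where
  "principal_uf \<xi> = {A. \<xi> \<in> A}"

text \<open>The Cech-Stone compactification beta 'k: ultrafilters with the Stone topology,
  generated by the basic open sets {u. A \<in> u}.\<close>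
definition beta_space :: "'k set set topology" where
  "beta_space = topology_generated_by {{u. ultrafilter_on u \<and> A \<in> u} | A. True}"

definition regular_uf :: "'k set set \<Rightarrow> bool" where
  "regular_uf x \<longleftrightarrow> (\<exists>E :: 'k \<Rightarrow> 'k set. (\<forall>\<alpha>. E \<alpha> \<in> x) \<and> (\<forall>\<xi>. finite {\<alpha>. \<xi> \<in> E \<alpha>}))"

text \<open>Extension beta g: sends an ultrafilter u to the limit of g along u
  (unique when Y is compact Hausdorff).\<close>
definition beta_ext :: "'b topology \<Rightarrow> ('k \<Rightarrow> 'b) \<Rightarrow> 'k set set \<Rightarrow> 'b" where
  "beta_ext Y g u = (THE y. y \<in> topspace Y \<and>
      (\<forall>U. openin Y U \<and> y \<in> U \<longrightarrow> {\<xi>. g \<xi> \<in> U} \<in> u))"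

definition weight_le :: "'b topology \<Rightarrow> 'k set \<Rightarrow> bool" where
  "weight_le Y K \<longleftrightarrow>
     (\<exists>\<B>. |\<B>| \<le>o |K| \<and> (\<forall>V \<in> \<B>. openin Y V) \<and>
        (\<forall>U y. openin Y U \<and> y \<in> U \<longrightarrow> (\<exists>V \<in> \<B>. y \<in> V \<and> V \<subseteq> U)))"

definition nowhere_dense_in :: "'a topology \<Rightarrow> 'a set \<Rightarrow> bool" where
  "nowhere_dense_in X S \<longleftrightarrow> X interior_of (X closure_of S) = {}"

end

(*
  Enumerate the nonempty members of a base of Y as e b, b in k, and use |k x k| = |k| to split
  off a copy h(k) of k that is not in x. On the copy let g (h b) be a point of e b outside F:
  then g has dense range, so every point of Y is the limit of g along some ultrafilter and
  beta g is onto. Off the copy, regularity of x (every index lies in only finitely many E a)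
  gives for each index one open neighbourhood of y inside all basic neighbourhoods e a of y
  with that index in E a; choosing g there outside F makes g converge to y along x. Such
  points exist because F has empty interior. Finally the principal ultrafilters are isolated,
  dense in beta k and sent outside F, so the preimage of F is nowhere dense.
*)
theory Submission
  imports Defs
begin

definition proper_filter :: "'k set set \<Rightarrow> bool" where
  "proper_filter M \<longleftrightarrow>
     UNIV \<in> M \<and> {} \<notin> M \<and>
     (\<forall>A B. A \<in> M \<and> A \<subseteq> B \<longrightarrow> B \<in> M) \<and>
     (\<forall>A B. A \<in> M \<and> B \<in> M \<longrightarrow> A \<inter> B \<in> M)"

lemma proper_filter_UNIV: "proper_filter M \<Longrightarrow> UNIV \<in> M"
  and proper_filter_mono: "proper_filter M \<Longrightarrow> A \<in> M \<Longrightarrow> A \<subseteq> B \<Longrightarrow> B \<in> M"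
  and proper_filter_Int: "proper_filter M \<Longrightarrow> A \<in> M \<Longrightarrow> B \<in> M \<Longrightarrow> A \<inter> B \<in> M"
  unfolding proper_filter_def by blast+

lemma ultrafilter_on_iff_proper_filter:
  "ultrafilter_on u \<longleftrightarrow> proper_filter u \<and> (\<forall>A. A \<in> u \<or> - A \<in> u)"
  unfolding ultrafilter_on_def proper_filter_def by blast

lemma ultrafilter_on_UNIV: "ultrafilter_on u \<Longrightarrow> UNIV \<in> u"
  and ultrafilter_on_not_empty: "ultrafilter_on u \<Longrightarrow> {} \<notin> u"
  and ultrafilter_on_mono: "ultrafilter_on u \<Longrightarrow> A \<in> u \<Longrightarrow> A \<subseteq> B \<Longrightarrow> B \<in> u"
  and ultrafilter_on_Int: "ultrafilter_on u \<Longrightarrow> A \<in> u \<Longrightarrow> B \<in> u \<Longrightarrow> A \<inter> B \<in> u"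
  and ultrafilter_on_Compl: "ultrafilter_on u \<Longrightarrow> A \<notin> u \<Longrightarrow> - A \<in> u"
  unfolding ultrafilter_on_def by blast+

lemma ultrafilter_on_finite_Union:
  assumes u: "ultrafilter_on u" and "finite S" "\<Union>S \<in> u"
  shows "\<exists>A\<in>S. A \<in> u"
  using assms(2,3)
proof (induction S rule: finite_induct)
  case empty
  then show ?case using ultrafilter_on_not_empty[OF u] by simp
next
  case (insert A S)
  show ?case
  proof (cases "A \<in> u")
    case False
    then have "(A \<union> \<Union>S) \<inter> - A \<in> u"
      using insert.prems by (simp add: ultrafilter_on_Int[OF u] ultrafilter_on_Compl[OF u])
    then have "\<Union>S \<in> u" by (rule ultrafilter_on_mono[OF u]) blast
    then show ?thesis using insert.IH by blast
  qed simp
qed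

lemma proper_filter_Union_chain:
  assumes "C \<noteq> {}" "\<And>M. M \<in> C \<Longrightarrow> proper_filter M"
    and "\<And>M N. M \<in> C \<Longrightarrow> N \<in> C \<Longrightarrow> M \<subseteq> N \<or> N \<subseteq> M"
  shows "proper_filter (\<Union>C)"
  unfolding proper_filter_def
proof (intro conjI allI impI)
  show "UNIV \<in> \<Union>C" "{} \<notin> \<Union>C" using assms(1,2) unfolding proper_filter_def by blast+
  fix A B
  show "B \<in> \<Union>C" if "A \<in> \<Union>C \<and> A \<subseteq> B"
    using that assms(2) unfolding proper_filter_def by blast
  show "A \<inter> B \<in> \<Union>C" if AB: "A \<in> \<Union>C \<and> B \<in> \<Union>C"
  proof -
    obtain M N where "M \<in> C" "N \<in> C" "A \<in> M" "B \<in> N" using AB by blast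
    with assms(3)[of M N] have "A \<in> M \<and> B \<in> M \<and> M \<in> C \<or> A \<in> N \<and> B \<in> N \<and> N \<in> C" by blast
    then show ?thesis using assms(2) unfolding proper_filter_def by blast
  qed
qed

text \<open>If neither \<open>A\<close> nor \<open>-A\<close> belonged to a maximal proper filter \<open>M\<close>,
  the sets containing some \<open>C \<inter> A\<close> with \<open>C \<in> M\<close> would form a strictly larger proper filter.\<close>
lemma maximal_proper_filter_ultrafilter_on:
  assumes M: "proper_filter M" and max: "\<And>N. proper_filter N \<Longrightarrow> M \<subseteq> N \<Longrightarrow> N = M"
  shows "ultrafilter_on M"
  unfolding ultrafilter_on_iff_proper_filter
proof (intro conjI allI M)
  fix A
  show "A \<in> M \<or> - A \<in> M"
  proof (rule disjCI)
    assume "- A \<notin> M"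
    define N where "N = {B. \<exists>C\<in>M. C \<inter> A \<subseteq> B}"
    have meets_A: "C \<inter> A \<noteq> {}" if "C \<in> M" for C
      using proper_filter_mono[OF M that, of "- A"] \<open>- A \<notin> M\<close> by blast
    have "proper_filter N"
      unfolding proper_filter_def
    proof (intro conjI allI impI)
      show "UNIV \<in> N" using proper_filter_UNIV[OF M] unfolding N_def by blast
      show "{} \<notin> N" using meets_A unfolding N_def by blast
      fix B B'
      show "B' \<in> N" if "B \<in> N \<and> B \<subseteq> B'" using that unfolding N_def by blast
      show "B \<inter> B' \<in> N" if BB': "B \<in> N \<and> B' \<in> N"
      proof -
        obtain C C' where "C \<in> M" "C' \<in> M" "C \<inter> A \<subseteq> B" "C' \<inter> A \<subseteq> B'"
          using BB' unfolding N_def by blast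
        moreover have "C \<inter> C' \<in> M" using calculation(1,2) by (rule proper_filter_Int[OF M])
        ultimately show ?thesis unfolding N_def by blast
      qed
    qed
    moreover have "M \<subseteq> N" unfolding N_def by blast
    ultimately have "N = M" by (rule max)
    moreover have "A \<in> N" using proper_filter_UNIV[OF M] unfolding N_def by blast
    ultimately show "A \<in> M" by simp
  qed
qed

lemma proper_filter_extends_to_ultrafilter:
  assumes "proper_filter M"
  obtains u where "ultrafilter_on u" "M \<subseteq> u"
proof -
  let ?\<F> = "{N. proper_filter N \<and> M \<subseteq> N}"
  have "\<exists>U\<in>?\<F>. \<forall>N\<in>?\<F>. U \<subseteq> N \<longrightarrow> N = U"
  proof (rule subset_Zorn_nonempty)
    show "?\<F> \<noteq> {}" using assms by blast
  next
    fix C assume C: "C \<noteq> {}" "subset.chain ?\<F> C"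
    then have "proper_filter (\<Union>C)"
      by (intro proper_filter_Union_chain) (auto simp: subset_chain_def)
    moreover have "M \<subseteq> \<Union>C" using C unfolding subset_chain_def by blast
    ultimately show "\<Union>C \<in> ?\<F>" by blast
  qed
  then obtain U where U: "proper_filter U" "M \<subseteq> U" and U_max: "\<forall>N\<in>?\<F>. U \<subseteq> N \<longrightarrow> N = U"
    by blast
  have "ultrafilter_on U"
  proof (rule maximal_proper_filter_ultrafilter_on[OF U(1)])
    fix N assume "proper_filter N" "U \<subseteq> N"
    then show "N = U" using U_max U(2) by blast
  qed
  then show thesis using U(2) by (rule that)
qed

definition converges_along :: "'b topology \<Rightarrow> ('k \<Rightarrow> 'b) \<Rightarrow> 'k set set \<Rightarrow> 'b \<Rightarrow> bool" where
  "converges_along Y g u z \<longleftrightarrow> z \<in> topspace Y \<and> (\<forall>U. openin Y U \<and> z \<in> U \<longrightarrow> {\<xi>. g \<xi> \<in> U} \<in> u)"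

lemma converges_along_unique:
  assumes "Hausdorff_space Y" "ultrafilter_on u" "converges_along Y g u z" "converges_along Y g u w"
  shows "z = w"
proof (rule ccontr)
  assume "z \<noteq> w"
  moreover have "z \<in> topspace Y" "w \<in> topspace Y"
    using assms(3,4) unfolding converges_along_def by blast+
  ultimately obtain U V where UV: "openin Y U" "openin Y V" "z \<in> U" "w \<in> V" "disjnt U V"
    using assms(1) unfolding Hausdorff_space_def by metis
  have "{\<xi>. g \<xi> \<in> U} \<in> u" "{\<xi>. g \<xi> \<in> V} \<in> u"
    using assms(3,4) UV(1-4) unfolding converges_along_def by blast+
  then have "{\<xi>. g \<xi> \<in> U} \<inter> {\<xi>. g \<xi> \<in> V} \<in> u" by (rule ultrafilter_on_Int[OF assms(2)])
  moreover have "{\<xi>. g \<xi> \<in> U} \<inter> {\<xi>. g \<xi> \<in> V} = {}" using UV(5) by (auto simp: disjnt_def)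
  ultimately show False using ultrafilter_on_not_empty[OF assms(2)] by simp
qed

lemma beta_ext_eqI:
  assumes "Hausdorff_space Y" "ultrafilter_on u" "converges_along Y g u z"
  shows "beta_ext Y g u = z"
  unfolding beta_ext_def
  using assms converges_along_unique[OF assms(1,2)]
  by (intro the_equality) (simp_all add: converges_along_def)

lemma converges_along_exists:
  assumes "compact_space Y" "ultrafilter_on u" "\<And>\<xi>. g \<xi> \<in> topspace Y"
  obtains z where "converges_along Y g u z"
proof (rule ccontr)
  assume "\<not> thesis"
  then have "\<nexists>z. converges_along Y g u z" using that by blast
  then have "\<forall>z\<in>topspace Y. \<exists>U. openin Y U \<and> z \<in> U \<and> {\<xi>. g \<xi> \<in> U} \<notin> u"
    unfolding converges_along_def by blast
  then obtain W where W: "\<And>z. z \<in> topspace Y \<Longrightarrow> openin Y (W z) \<and> z \<in> W z \<and> {\<xi>. g \<xi> \<in> W z} \<notin> u"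
    by metis
  then have "(\<forall>U\<in>W ` topspace Y. openin Y U) \<and> topspace Y \<subseteq> \<Union>(W ` topspace Y)" by auto
  then obtain \<F> where "finite \<F>" "\<F> \<subseteq> W ` topspace Y" "topspace Y \<subseteq> \<Union>\<F>"
    using assms(1)[unfolded compact_space_alt, rule_format, of "W ` topspace Y"] by blast
  then obtain Z where Z: "finite Z" "Z \<subseteq> topspace Y" "topspace Y \<subseteq> \<Union>(W ` Z)"
    using finite_subset_image by metis
  have "\<Union>((\<lambda>z. {\<xi>. g \<xi> \<in> W z}) ` Z) = UNIV" using Z(3) assms(3) by blast
  then have "\<Union>((\<lambda>z. {\<xi>. g \<xi> \<in> W z}) ` Z) \<in> u" using ultrafilter_on_UNIV[OF assms(2)] by simp
  then obtain z where "z \<in> Z" "{\<xi>. g \<xi> \<in> W z} \<in> u"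
    using ultrafilter_on_finite_Union[OF assms(2)] Z(1) by blast
  then show False using W Z(2) by blast
qed

lemma converges_along_beta_ext:
  assumes "compact_space Y" "Hausdorff_space Y" "ultrafilter_on u" "\<And>\<xi>. g \<xi> \<in> topspace Y"
  shows "converges_along Y g u (beta_ext Y g u)"
proof -
  obtain z where "converges_along Y g u z" using converges_along_exists[OF assms(1,3,4)] .
  then show ?thesis using beta_ext_eqI[OF assms(2,3)] by simp
qed

lemma nowhere_dense_in_if_isolated_dense_disjoint:
  assumes "X closure_of D = topspace X" "\<And>d. d \<in> D \<Longrightarrow> openin X {d}" "D \<inter> S = {}"
  shows "nowhere_dense_in X S"
proof -
  have "d \<notin> X closure_of S" if "d \<in> D" for d
  proof
    assume "d \<in> X closure_of S"
    then have "\<exists>y. y \<in> S \<and> y \<in> {d}"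
      using assms(2)[OF that] unfolding in_closure_of by blast
    then show False using assms(3) that by blast
  qed
  then have "D \<inter> X interior_of (X closure_of S) = {}"
    using interior_of_subset[of X "X closure_of S"] by blast
  then show ?thesis
    using assms(1)[unfolded dense_intersects_open, rule_format, of "X interior_of (X closure_of S)"]
    unfolding nowhere_dense_in_def by auto
qed

lemma topspace_beta_space: "topspace beta_space = {u. ultrafilter_on u}"
  unfolding beta_space_def topology_generated_by_topspace
  using ultrafilter_on_UNIV by blast

lemma openin_beta_space_basic: "openin beta_space {u. ultrafilter_on u \<and> A \<in> u}"
  unfolding beta_space_def openin_topology_generated_by_iff
  by (rule generate_topology_on.Basis) blast

lemma openin_beta_space_contains_basic:
  assumes "openin beta_space W" "u \<in> W"
  obtains A where "A \<in> u" "{v. ultrafilter_on v \<and> A \<in> v} \<subseteq> W"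
proof -
  have "generate_topology_on {{u. ultrafilter_on u \<and> A \<in> u} | A. True} W"
    using assms(1) unfolding beta_space_def openin_topology_generated_by_iff .
  then have "\<forall>u\<in>W. ultrafilter_on u \<longrightarrow> (\<exists>A\<in>u. {v. ultrafilter_on v \<and> A \<in> v} \<subseteq> W)"
  proof (induction rule: generate_topology_on.induct)
    case (Int W1 W2)
    show ?case
    proof (intro ballI impI)
      fix u assume u: "u \<in> W1 \<inter> W2" "ultrafilter_on u"
      obtain A1 A2 where "A1 \<in> u" "{v. ultrafilter_on v \<and> A1 \<in> v} \<subseteq> W1"
        "A2 \<in> u" "{v. ultrafilter_on v \<and> A2 \<in> v} \<subseteq> W2"
        using Int.IH u by blast
      then show "\<exists>A\<in>u. {v. ultrafilter_on v \<and> A \<in> v} \<subseteq> W1 \<inter> W2"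
        using u(2) ultrafilter_on_Int ultrafilter_on_mono[of _ "A1 \<inter> A2"] by blast
    qed
  qed blast+
  moreover have "ultrafilter_on u"
    using assms openin_subset topspace_beta_space by blast
  ultimately show thesis using that assms(2) by blast
qed

lemma ultrafilter_on_principal_uf: "ultrafilter_on (principal_uf \<xi>)"
  unfolding ultrafilter_on_def principal_uf_def by auto

lemma principal_uf_eqI:
  assumes u: "ultrafilter_on u" and "{\<xi>} \<in> u"
  shows "u = principal_uf \<xi>"
proof -
  have "A \<in> u \<longleftrightarrow> \<xi> \<in> A" for A
  proof
    assume "A \<in> u"
    then have "A \<inter> {\<xi>} \<noteq> {}"
      using ultrafilter_on_Int[OF u _ \<open>{\<xi>} \<in> u\<close>] ultrafilter_on_not_empty[OF u] by metis
    then show "\<xi> \<in> A" by blast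
  next
    assume "\<xi> \<in> A"
    then show "A \<in> u" using ultrafilter_on_mono[OF u \<open>{\<xi>} \<in> u\<close>] by blast
  qed
  then show ?thesis unfolding principal_uf_def by blast
qed

lemma openin_beta_space_principal_uf: "openin beta_space {principal_uf \<xi>}"
proof -
  have "{u. ultrafilter_on u \<and> {\<xi>} \<in> u} = {principal_uf \<xi>}"
  proof (intro equalityI subsetI)
    fix u assume "u \<in> {u. ultrafilter_on u \<and> {\<xi>} \<in> u}"
    then show "u \<in> {principal_uf \<xi>}" by (simp add: principal_uf_eqI)
  next
    fix u assume "u \<in> {principal_uf \<xi>}"
    then show "u \<in> {u. ultrafilter_on u \<and> {\<xi>} \<in> u}"
      using ultrafilter_on_principal_uf by (simp add: principal_uf_def)
  qed
  then show ?thesis using openin_beta_space_basic[of "{\<xi>}"] by (simp only:)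
qed

lemma dense_principal_uf: "beta_space closure_of range principal_uf = topspace beta_space"
  unfolding dense_intersects_open
proof (intro allI impI)
  fix W assume W: "openin beta_space W \<and> W \<noteq> {}"
  then obtain u where "u \<in> W" by blast
  then have u: "ultrafilter_on u"
    using W openin_subset[of beta_space W] unfolding topspace_beta_space by blast
  obtain A where "A \<in> u" and A: "{v. ultrafilter_on v \<and> A \<in> v} \<subseteq> W"
    using openin_beta_space_contains_basic[of W u] W \<open>u \<in> W\<close> by blast
  then have "A \<noteq> {}" using ultrafilter_on_not_empty[OF u] by blast
  then obtain \<xi> where "A \<in> principal_uf \<xi>" unfolding principal_uf_def by blast
  then have "principal_uf \<xi> \<in> {v. ultrafilter_on v \<and> A \<in> v}"
    using ultrafilter_on_principal_uf by simp
  then have "principal_uf \<xi> \<in> W" by (rule subsetD[OF A])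
  then show "range principal_uf \<inter> W \<noteq> {}" by blast
qed

lemma beta_ext_principal_uf:
  assumes "Hausdorff_space Y" "g \<xi> \<in> topspace Y"
  shows "beta_ext Y g (principal_uf \<xi>) = g \<xi>"
  using assms by (intro beta_ext_eqI ultrafilter_on_principal_uf) (auto simp: converges_along_def principal_uf_def)

lemma nowhere_dense_beta_ext_vimage:
  assumes "Hausdorff_space Y" "\<And>\<xi>. g \<xi> \<in> topspace Y - F"
  shows "nowhere_dense_in beta_space {u \<in> topspace beta_space. beta_ext Y g u \<in> F}"
proof (rule nowhere_dense_in_if_isolated_dense_disjoint[OF dense_principal_uf])
  show "openin beta_space {d}" if "d \<in> range principal_uf" for d
    using that by (auto intro: openin_beta_space_principal_uf)
  have "beta_ext Y g (principal_uf \<xi>) = g \<xi>" for \<xi>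
    using assms by (intro beta_ext_principal_uf) auto
  then show "range principal_uf \<inter> {u \<in> topspace beta_space. beta_ext Y g u \<in> F} = {}"
    using assms(2) by auto
qed

lemma proper_filter_vimage_nhds:
  assumes "Y closure_of range g = topspace Y" "z \<in> topspace Y"
  shows "proper_filter {A. \<exists>U. openin Y U \<and> z \<in> U \<and> {\<xi>. g \<xi> \<in> U} \<subseteq> A}"
    (is "proper_filter ?M")
  unfolding proper_filter_def
proof (intro conjI allI impI)
  show "UNIV \<in> ?M" using assms(2) openin_topspace[of Y] by blast
  show "{} \<notin> ?M"
  proof
    assume "{} \<in> ?M"
    then obtain U where "openin Y U" "z \<in> U" "{\<xi>. g \<xi> \<in> U} \<subseteq> {}" by blast
    then show False using assms(1)[unfolded dense_intersects_open, rule_format, of U] by blast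
  qed
  fix A B
  show "B \<in> ?M" if "A \<in> ?M \<and> A \<subseteq> B" using that by blast
  show "A \<inter> B \<in> ?M" if AB: "A \<in> ?M \<and> B \<in> ?M"
  proof -
    obtain U V where "openin Y U" "z \<in> U" "{\<xi>. g \<xi> \<in> U} \<subseteq> A"
      and "openin Y V" "z \<in> V" "{\<xi>. g \<xi> \<in> V} \<subseteq> B"
      using AB by blast
    then show ?thesis by (intro CollectI exI[of _ "U \<inter> V"]) auto
  qed
qed

lemma dense_range_converges_along_ultrafilter:
  assumes "Y closure_of range g = topspace Y" "z \<in> topspace Y"
  obtains u where "ultrafilter_on u" "converges_along Y g u z"
proof -
  obtain u where u: "ultrafilter_on u"
    and M: "{A. \<exists>U. openin Y U \<and> z \<in> U \<and> {\<xi>. g \<xi> \<in> U} \<subseteq> A} \<subseteq> u"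
    using proper_filter_extends_to_ultrafilter[OF proper_filter_vimage_nhds[OF assms]] .
  have "converges_along Y g u z"
    unfolding converges_along_def
  proof (intro conjI allI impI assms(2))
    fix U assume "openin Y U \<and> z \<in> U"
    then show "{\<xi>. g \<xi> \<in> U} \<in> u" using M by blast
  qed
  with u show thesis by (rule that)
qed

lemma beta_ext_image_dense:
  assumes "compact_space Y" "Hausdorff_space Y" "\<And>\<xi>. g \<xi> \<in> topspace Y"
    and "Y closure_of range g = topspace Y"
  shows "beta_ext Y g ` topspace beta_space = topspace Y"
proof (intro antisym subsetI)
  fix z assume "z \<in> beta_ext Y g ` topspace beta_space"
  then obtain u where "ultrafilter_on u" "z = beta_ext Y g u" using topspace_beta_space by blast
  then show "z \<in> topspace Y"
    using converges_along_beta_ext[OF assms(1,2) \<open>ultrafilter_on u\<close> assms(3)]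
    by (simp add: converges_along_def)
next
  fix z assume "z \<in> topspace Y"
  then obtain u where u: "ultrafilter_on u" "converges_along Y g u z"
    using dense_range_converges_along_ultrafilter[OF assms(4)] by blast
  then have "beta_ext Y g u = z" by (rule beta_ext_eqI[OF assms(2)])
  moreover have "u \<in> topspace beta_space" using u(1) by (simp add: topspace_beta_space)
  ultimately show "z \<in> beta_ext Y g ` topspace beta_space" by (rule image_eqI[OF sym])
qed

lemma weight_le_enumerate_base:
  assumes "weight_le Y (UNIV :: 'k set)" "topspace Y \<noteq> {}"
  obtains e :: "'k \<Rightarrow> 'b set"
  where "\<And>\<beta>. openin Y (e \<beta>)" "\<And>\<beta>. e \<beta> \<noteq> {}"
    "\<And>U z. openin Y U \<Longrightarrow> z \<in> U \<Longrightarrow> \<exists>\<beta>. z \<in> e \<beta> \<and> e \<beta> \<subseteq> U"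
proof -
  obtain \<B> where \<B>: "|\<B>| \<le>o |UNIV :: 'k set|" "\<And>V. V \<in> \<B> \<Longrightarrow> openin Y V"
    "\<And>U z. openin Y U \<Longrightarrow> z \<in> U \<Longrightarrow> \<exists>V\<in>\<B>. z \<in> V \<and> V \<subseteq> U"
    using assms(1) unfolding weight_le_def by metis
  have "\<B> - {{}} \<noteq> {}" using \<B>(3)[OF openin_topspace] assms(2) by blast
  moreover have "|\<B> - {{}}| \<le>o |UNIV :: 'k set|"
    using ordLeq_transitive[OF card_of_mono1[of "\<B> - {{}}" \<B>] \<B>(1)] by blast
  ultimately obtain e :: "'k \<Rightarrow> 'b set" where e: "range e = \<B> - {{}}"
    using card_of_ordLeq2 by metis
  show thesis
  proof (rule that)
    show "openin Y (e \<beta>)" "e \<beta> \<noteq> {}" for \<beta>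
      using rangeI[of e \<beta>] \<B>(2) unfolding e by auto
    show "\<exists>\<beta>. z \<in> e \<beta> \<and> e \<beta> \<subseteq> U" if U: "openin Y U" "z \<in> U" for U z
    proof -
      obtain V where "V \<in> \<B>" "z \<in> V" "V \<subseteq> U" using \<B>(3)[OF U] by blast
      moreover from calculation(1,2) have "V \<in> range e" unfolding e by blast
      ultimately show ?thesis by blast
    qed
  qed
qed

text \<open>A bijection \<open>k \<times> k \<rightarrow> k\<close> yields disjoint copies of \<open>k\<close>; at most one of them belongs to \<open>x\<close>.\<close>
lemma infinite_copy_not_in_ultrafilter:
  assumes "infinite (UNIV :: 'k set)" "ultrafilter_on x"
  obtains h :: "'k \<Rightarrow> 'k" where "inj h" "- range h \<in> x"
proof -
  obtain f :: "'k \<times> 'k \<Rightarrow> 'k" where "bij_betw f (UNIV \<times> UNIV) UNIV"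
    using card_of_Times_same_infinite[OF assms(1)] card_of_ordIso by blast
  then have f: "inj f" by (simp add: bij_betw_def)
  define copy where "copy a = range (\<lambda>\<beta>. f (a, \<beta>))" for a
  obtain a :: 'k where a: "a \<noteq> undefined"
    using ex_new_if_finite[OF assms(1), of "{undefined}"] by blast
  have "copy a \<inter> copy undefined = {}"
    unfolding copy_def using a f by (auto dest: injD)
  then have "\<not> (copy a \<in> x \<and> copy undefined \<in> x)"
    using ultrafilter_on_Int[OF assms(2)] ultrafilter_on_not_empty[OF assms(2)] by metis
  then obtain c where "copy c \<notin> x" by blast
  moreover have "inj (\<lambda>\<beta>. f (c, \<beta>))" using f by (auto intro: injI dest: injD)
  ultimately show thesis using that ultrafilter_on_Compl[OF assms(2)] unfolding copy_def by blast
qed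

text \<open>Each \<open>\<xi>\<close> lies in only finitely many sets \<open>E \<alpha>\<close> of the regularity witness, so
  \<open>W \<xi>\<close> can be the intersection of all \<open>V \<alpha>\<close> containing \<open>y\<close> with \<open>\<xi> \<in> E \<alpha>\<close>.\<close>
lemma regular_uf_diagonal_nhds:
  fixes x :: "'k set set" and V :: "'k \<Rightarrow> 'b set"
  assumes "regular_uf x" "ultrafilter_on x" "\<And>\<alpha>. openin Y (V \<alpha>)" "y \<in> topspace Y"
  obtains W :: "'k \<Rightarrow> 'b set" where "\<And>\<xi>. openin Y (W \<xi>)" "\<And>\<xi>. y \<in> W \<xi>"
    "\<And>\<alpha>. y \<in> V \<alpha> \<Longrightarrow> {\<xi>. W \<xi> \<subseteq> V \<alpha>} \<in> x"
proof -
  obtain E :: "'k \<Rightarrow> 'k set" where E: "\<And>\<alpha>. E \<alpha> \<in> x" "\<And>\<xi>. finite {\<alpha>. \<xi> \<in> E \<alpha>}"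
    using assms(1) unfolding regular_uf_def by blast
  define W where "W \<xi> = topspace Y \<inter> \<Inter>(V ` {\<alpha>. \<xi> \<in> E \<alpha> \<and> y \<in> V \<alpha>})" for \<xi>
  show thesis
  proof (rule that)
    show "openin Y (W \<xi>)" for \<xi>
    proof -
      have "finite {\<alpha>. \<xi> \<in> E \<alpha> \<and> y \<in> V \<alpha>}"
        using E(2)[of \<xi>] by (rule finite_subset[rotated]) blast
      then show ?thesis
        unfolding W_def using assms(3) by (intro openin_Int_Inter) auto
    qed
    show "y \<in> W \<xi>" for \<xi> unfolding W_def using assms(4) by blast
    show "{\<xi>. W \<xi> \<subseteq> V \<alpha>} \<in> x" if "y \<in> V \<alpha>" for \<alpha>
    proof (rule ultrafilter_on_mono[OF assms(2) E(1)[of \<alpha>]])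
      show "E \<alpha> \<subseteq> {\<xi>. W \<xi> \<subseteq> V \<alpha>}" using that unfolding W_def by blast
    qed
  qed
qed

lemma converges_along_shrinking_nhds:
  assumes x: "ultrafilter_on x" and "N \<in> x" "\<And>\<xi>. \<xi> \<in> N \<Longrightarrow> g \<xi> \<in> W \<xi>"
    and base: "\<And>U. openin Y U \<Longrightarrow> y \<in> U \<Longrightarrow> \<exists>\<alpha>. y \<in> V \<alpha> \<and> V \<alpha> \<subseteq> U"
    and shrink: "\<And>\<alpha>. y \<in> V \<alpha> \<Longrightarrow> {\<xi>. W \<xi> \<subseteq> V \<alpha>} \<in> x"
    and "y \<in> topspace Y"
  shows "converges_along Y g x y"
  unfolding converges_along_def
proof (intro conjI allI impI assms(6))
  fix U assume "openin Y U \<and> y \<in> U"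
  then obtain \<alpha> where \<alpha>: "y \<in> V \<alpha>" "V \<alpha> \<subseteq> U" using base by blast
  have "{\<xi>. W \<xi> \<subseteq> V \<alpha>} \<inter> N \<subseteq> {\<xi>. g \<xi> \<in> U}" using assms(3) \<alpha>(2) by blast
  then show "{\<xi>. g \<xi> \<in> U} \<in> x"
    by (rule ultrafilter_on_mono[OF x ultrafilter_on_Int[OF x shrink[OF \<alpha>(1)] assms(2)]])
qed

lemma choose_outside_empty_interior:
  assumes "Y interior_of F = {}" "\<And>i. openin Y (V i)" "\<And>i. V i \<noteq> {}"
  obtains p where "\<And>i. p i \<in> V i - F"
proof -
  have "\<exists>p. p \<in> V i - F" for i
    using assms(1)[unfolded interior_of_eq_empty, rule_format, of "V i"] assms(2,3)[of i] by blast
  then obtain p where "\<And>i. p i \<in> V i - F" by metis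
  then show thesis by (rule that)
qed

lemma dense_map_avoiding_converging:
  assumes "infinite (UNIV :: 'k set)" "ultrafilter_on x" "regular_uf x"
    and "weight_le Y (UNIV :: 'k set)" "Y interior_of F = {}" "y \<in> topspace Y"
  obtains g :: "'k \<Rightarrow> 'b"
  where "\<And>\<xi>. g \<xi> \<in> topspace Y - F" "Y closure_of range g = topspace Y" "converges_along Y g x y"
proof -
  obtain e :: "'k \<Rightarrow> 'b set" where e: "\<And>\<beta>. openin Y (e \<beta>)" "\<And>\<beta>. e \<beta> \<noteq> {}"
    "\<And>U z. openin Y U \<Longrightarrow> z \<in> U \<Longrightarrow> \<exists>\<beta>. z \<in> e \<beta> \<and> e \<beta> \<subseteq> U"
    using weight_le_enumerate_base[OF assms(4)] assms(6) by blast
  obtain h :: "'k \<Rightarrow> 'k" where h: "inj h" "- range h \<in> x"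
    using infinite_copy_not_in_ultrafilter[OF assms(1,2)] .
  obtain W :: "'k \<Rightarrow> 'b set" where W: "\<And>\<xi>. openin Y (W \<xi>)" "\<And>\<xi>. y \<in> W \<xi>"
    "\<And>\<alpha>. y \<in> e \<alpha> \<Longrightarrow> {\<xi>. W \<xi> \<subseteq> e \<alpha>} \<in> x"
    using regular_uf_diagonal_nhds[where V = e, OF assms(3,2) e(1) assms(6)] by blast
  obtain p where p: "\<And>\<beta>. p \<beta> \<in> e \<beta> - F"
    using choose_outside_empty_interior[where V = e, OF assms(5) e(1,2)] by blast
  have W_ne: "\<And>\<xi>. W \<xi> \<noteq> {}" using W(2) by blast
  obtain q where q: "\<And>\<xi>. q \<xi> \<in> W \<xi> - F"
    using choose_outside_empty_interior[where V = W, OF assms(5) W(1) W_ne] by blast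
  define g where "g \<xi> = (if \<xi> \<in> range h then p (inv h \<xi>) else q \<xi>)" for \<xi>
  have g_h: "g (h \<beta>) = p \<beta>" for \<beta> unfolding g_def using h(1) by simp
  show thesis
  proof
    have "p \<beta> \<in> topspace Y - F" for \<beta> using p[of \<beta>] openin_subset[OF e(1)[of \<beta>]] by blast
    moreover have "q \<xi> \<in> topspace Y - F" for \<xi> using q[of \<xi>] openin_subset[OF W(1)[of \<xi>]] by blast
    ultimately show "g \<xi> \<in> topspace Y - F" for \<xi> by (simp add: g_def)
    show "Y closure_of range g = topspace Y"
      unfolding dense_intersects_open
    proof (intro allI impI)
      fix U assume U: "openin Y U \<and> U \<noteq> {}"
      then obtain z where "z \<in> U" by blast
      then obtain \<beta> where "e \<beta> \<subseteq> U" using e(3) U by blast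
      then have "p \<beta> \<in> U" using p[of \<beta>] by blast
      then have "g (h \<beta>) \<in> U" by (simp add: g_h)
      then show "range g \<inter> U \<noteq> {}" by blast
    qed
    have "g \<xi> \<in> W \<xi>" if "\<xi> \<in> - range h" for \<xi> using that q unfolding g_def by auto
    then show "converges_along Y g x y"
      by (rule converges_along_shrinking_nhds[where V = e, OF assms(2) h(2) _ e(3) W(3) assms(6)])
  qed
qed

theorem lemma7:
  fixes x :: "'k set set" and Y :: "'b topology" and F :: "'b set" and y :: 'b
  assumes "infinite (UNIV :: 'k set)"
    and "ultrafilter_on x" and "regular_uf x"
    and "compact_space Y" and "Hausdorff_space Y"
    and "weight_le Y (UNIV :: 'k set)"
    and "F \<subseteq> topspace Y" and "Y interior_of F = {}"
    and "y \<in> F"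
  shows "\<exists>g :: 'k \<Rightarrow> 'b. (\<forall>\<xi>. g \<xi> \<in> topspace Y) \<and>
           beta_ext Y g ` topspace beta_space = topspace Y \<and>
           beta_ext Y g x = y \<and>
           (\<forall>\<xi>. g \<xi> \<notin> F) \<and>
           nowhere_dense_in beta_space {u \<in> topspace beta_space. beta_ext Y g u \<in> F}"
proof -
  have "y \<in> topspace Y" using assms(7,9) by blast
  then obtain g :: "'k \<Rightarrow> 'b" where g: "\<And>\<xi>. g \<xi> \<in> topspace Y - F"
    "Y closure_of range g = topspace Y" "converges_along Y g x y"
    using dense_map_avoiding_converging[OF assms(1-3,6,8)] by blast
  then have "\<And>\<xi>. g \<xi> \<in> topspace Y" by blast
  then show ?thesis
    using g beta_ext_image_dense[OF assms(4,5)] beta_ext_eqI[OF assms(5,2)]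
      nowhere_dense_beta_ext_vimage[OF assms(5)]
    by blast
qed

end
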